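(* Let $d\ge2$ and let $\rho$ be a diagonal symmetric state on $\mathbb{C}^d\otimes\mathbb{C}^d$ that is PPT, with associated matrix $M=M(\rho)$. Let $\mathbf{x}\in\mathbb{R}^d$ with $x_i>0$ for all $i$, let $\|\mathbf{x}\|_1=\sum_i x_i$, let $\ket{u_{\mathbf{x}}}=\mathbf{x}/\|\mathbf{x}\|_1$, and let $M^{+}$ denote the Moore–Penrose pseudo-inverse of $M$. Suppose there exists $\lambda\in[0,1)$ such that (1) $\lambda\le M_{ij}\|\mathbf{x}\|_1^2/(x_ix_j)$ for all $i,j$; (2) $\ket{u_{\mathbf{x}}}$ lies in the range of $M$ and $\lambda\le 1/\bra{u_{\mathbf{x}}}M^{+}\ket{u_{\mathbf{x}}}$; (3) $\lambda x_i(\|\mathbf{x}\|_1-2x_i)\ge\|\mathbf{x}\|_1^2\left[\sum_{j\ne i}M_{ij}-M_{ii}\right]$ for all $i$. Then $\rho$ is separable; equivalently, $M(\rho)$ is completely positive.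
   Context: Let $\{\ket{0},\dots,\ket{d-1}\}$ be the computational basis of $\mathbb{C}^d$. Define $\ket{D_{ii}}=\ket{ii}$ and, for $i<j$, $\ket{D_{ij}}=(\ket{ij}+\ket{ji})/\sqrt{2}$. A state $\rho$ on $\mathbb{C}^d\otimes\mathbb{C}^d$ is diagonal symmetric (DS) if $\rho=\sum_{0\le i\le j<d}p_{ij}\ket{D_{ij}}\bra{D_{ij}}$ with $p_{ij}\ge 0$ and $\sum_{i\le j}p_{ij}=1$; set $p_{ji}=p_{ij}$. Its associated matrix $M(\rho)$ is the real symmetric $d\times d$ matrix with $M(\rho)_{ii}=p_{ii}$ and $M(\rho)_{ij}=p_{ij}/2$ for $i\ne j$. $\rho$ is PPT if its partial transpose with respect to the computational basis of the second factor is positive semidefinite. A state is separable if it is a convex combination of product states $\rho^A\otimes\rho^B$. A real $d\times d$ matrix $A$ is completely positive if $A=BB^T$ for some real $d\times k$ matrix $B$ with non-negative entries. *)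

theory Defs
  imports Complex_Main
begin

text \<open>Conventions: d is the local dimension; the computational basis of C^d is indexed by
  0..d-1.  Vectors in C^d are functions nat => complex (only indices < d matter); vectors in
  C^d (x) C^d are functions on pairs (i,j) (basis vector |ij>); operators are kernels
  A a b = <a|A|b>.\<close>

definition psd_on :: "'a set \<Rightarrow> ('a \<Rightarrow> 'a \<Rightarrow> complex) \<Rightarrow> bool" where
  "psd_on I A \<longleftrightarrow> (\<forall>v :: 'a \<Rightarrow> complex.
     Im (\<Sum>a\<in>I. \<Sum>b\<in>I. cnj (v a) * A a b * v b) = 0 \<and>
     Re (\<Sum>a\<in>I. \<Sum>b\<in>I. cnj (v a) * A a b * v b) \<ge> 0)"

definition is_state_on :: "'a set \<Rightarrow> ('a \<Rightarrow> 'a \<Rightarrow> complex) \<Rightarrow> bool" where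
  "is_state_on I A \<longleftrightarrow> psd_on I A \<and> (\<Sum>a\<in>I. A a a) = 1"

abbreviation bip :: "nat \<Rightarrow> (nat \<times> nat) set" where
  "bip d \<equiv> {..<d} \<times> {..<d}"

definition dicke :: "nat \<Rightarrow> nat \<Rightarrow> nat \<times> nat \<Rightarrow> complex" where
  "dicke i j = (if i = j then (\<lambda>a. if a = (i, i) then 1 else 0)
                else (\<lambda>a. if a = (i, j) \<or> a = (j, i) then complex_of_real (1 / sqrt 2) else 0))"

definition ds_rho :: "nat \<Rightarrow> (nat \<Rightarrow> nat \<Rightarrow> real) \<Rightarrow> nat \<times> nat \<Rightarrow> nat \<times> nat \<Rightarrow> complex" where
  "ds_rho d p = (\<lambda>a b. \<Sum>(i, j) \<in> {(i, j). i \<le> j \<and> j < d}.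
       complex_of_real (p i j) * dicke i j a * cnj (dicke i j b))"

definition ds_coeffs :: "nat \<Rightarrow> (nat \<Rightarrow> nat \<Rightarrow> real) \<Rightarrow> bool" where
  "ds_coeffs d p \<longleftrightarrow> (\<forall>i j. p i j = p j i) \<and> (\<forall>i<d. \<forall>j<d. p i j \<ge> 0) \<and>
     (\<Sum>(i, j) \<in> {(i, j). i \<le> j \<and> j < d}. p i j) = 1"

definition assoc_mat :: "(nat \<Rightarrow> nat \<Rightarrow> real) \<Rightarrow> nat \<Rightarrow> nat \<Rightarrow> real" where
  "assoc_mat p i j = (if i = j then p i i else p i j / 2)"

definition partial_transpose :: "(nat \<times> nat \<Rightarrow> nat \<times> nat \<Rightarrow> complex) \<Rightarrow> nat \<times> nat \<Rightarrow> nat \<times> nat \<Rightarrow> complex" where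
  "partial_transpose A = (\<lambda>(i, j) (k, l). A (i, l) (k, j))"

definition PPT :: "nat \<Rightarrow> (nat \<times> nat \<Rightarrow> nat \<times> nat \<Rightarrow> complex) \<Rightarrow> bool" where
  "PPT d A \<longleftrightarrow> psd_on (bip d) (partial_transpose A)"

definition separable :: "nat \<Rightarrow> (nat \<times> nat \<Rightarrow> nat \<times> nat \<Rightarrow> complex) \<Rightarrow> bool" where
  "separable d A \<longleftrightarrow> (\<exists>(n::nat) (w :: nat \<Rightarrow> real) (RA :: nat \<Rightarrow> nat \<Rightarrow> nat \<Rightarrow> complex) RB.
     (\<forall>m<n. w m \<ge> 0 \<and> is_state_on {..<d} (RA m) \<and> is_state_on {..<d} (RB m)) \<and>
     (\<Sum>m<n. w m) = 1 \<and>
     (\<forall>i<d. \<forall>j<d. \<forall>k<d. \<forall>l<d.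
        A (i, j) (k, l) = (\<Sum>m<n. complex_of_real (w m) * RA m i k * RB m j l)))"

definition completely_positive :: "nat \<Rightarrow> (nat \<Rightarrow> nat \<Rightarrow> real) \<Rightarrow> bool" where
  "completely_positive d A \<longleftrightarrow> (\<exists>(k::nat) (B :: nat \<Rightarrow> nat \<Rightarrow> real).
     (\<forall>i<d. \<forall>l<k. B i l \<ge> 0) \<and>
     (\<forall>i<d. \<forall>j<d. A i j = (\<Sum>l<k. B i l * B j l)))"

definition matmul :: "nat \<Rightarrow> (nat \<Rightarrow> nat \<Rightarrow> real) \<Rightarrow> (nat \<Rightarrow> nat \<Rightarrow> real) \<Rightarrow> nat \<Rightarrow> nat \<Rightarrow> real" where
  "matmul d A B = (\<lambda>i j. \<Sum>k<d. A i k * B k j)"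

definition is_pinv :: "nat \<Rightarrow> (nat \<Rightarrow> nat \<Rightarrow> real) \<Rightarrow> (nat \<Rightarrow> nat \<Rightarrow> real) \<Rightarrow> bool" where
  "is_pinv d A P \<longleftrightarrow> (\<forall>i j. (d \<le> i \<or> d \<le> j) \<longrightarrow> P i j = 0) \<and>
     (\<forall>i<d. \<forall>j<d.
        matmul d (matmul d A P) A i j = A i j \<and>
        matmul d (matmul d P A) P i j = P i j \<and>
        matmul d A P i j = matmul d A P j i \<and>
        matmul d P A i j = matmul d P A j i)"

definition pinv :: "nat \<Rightarrow> (nat \<Rightarrow> nat \<Rightarrow> real) \<Rightarrow> nat \<Rightarrow> nat \<Rightarrow> real" where
  "pinv d A = (THE P. is_pinv d A P)"

definition in_range :: "nat \<Rightarrow> (nat \<Rightarrow> nat \<Rightarrow> real) \<Rightarrow> (nat \<Rightarrow> real) \<Rightarrow> bool" where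
  "in_range d A u \<longleftrightarrow> (\<exists>y :: nat \<Rightarrow> real. \<forall>i<d. (\<Sum>j<d. A i j * y j) = u i)"

end

(* Write u = x / ||x||_1.  Condition (1) says that N = M - lam u u^T is entrywise non-negative and
   condition (3) says that N is diagonally dominant.  Such an N is a non-negative combination of the
   matrices e_i e_i^T and (e_i + e_j)(e_i + e_j)^T, so M = lam u u^T + N is completely positive.

   A diagonal symmetric state with M = sum_t b_t b_t^T, b_t >= 0, is separable: for
   psi_m = sum_a sqrt (b_a) i^(m_a) |a> with m ranging over {0..3}^d, the average of
   |psi_m><psi_m| (x) |psi_m><psi_m| has entry b_i b_j at <ij|.|kl> when {k, l} = {i, j} and 0
   otherwise, which is exactly the contribution of b b^T to rho. *)

theory Submission
  imports Defs "HOL-Library.FuncSet"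
begin

section \<open>Completely positive matrices\<close>

lemma off_diagonal_pair_sum:
  fixes f :: "nat \<Rightarrow> nat \<Rightarrow> real"
  assumes "a < d" "c < d" and sym: "\<And>i j. i < d \<Longrightarrow> j < d \<Longrightarrow> f i j = f j i"
  shows "(\<Sum>i<d. \<Sum>j\<in>{..<d} - {i}.
            f i j * (of_bool (a = i) + of_bool (a = j)) * (of_bool (c = i) + of_bool (c = j)))
       = 2 * (of_bool (a = c) * (\<Sum>j\<in>{..<d} - {a}. f a j) + of_bool (a \<noteq> c) * f a c)"
proof -
  have swap: "(\<Sum>i<d. \<Sum>j\<in>{..<d} - {i}. g i j) = (\<Sum>j<d. \<Sum>i\<in>{..<d} - {j}. g i j)"
    for g :: "nat \<Rightarrow> nat \<Rightarrow> real"
    using sum.swap_restrict[of "{..<d}" "{..<d}" g "\<lambda>i j. j \<noteq> i"]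
    by (simp add: set_diff_eq conj_commute eq_commute)
  have "(\<Sum>i<d. \<Sum>j\<in>{..<d} - {i}. f i j * of_bool (a = i) * of_bool (c = i))
      = of_bool (a = c) * (\<Sum>j\<in>{..<d} - {a}. f a j)"
    using assms(1) by (simp add: sum_distrib_right[symmetric])
  moreover have "(\<Sum>i<d. \<Sum>j\<in>{..<d} - {i}. f i j * of_bool (a = j) * of_bool (c = j))
      = of_bool (a = c) * (\<Sum>j\<in>{..<d} - {a}. f a j)"
    using assms by (subst swap) (simp add: sum_distrib_right[symmetric] sym)
  moreover have "(\<Sum>i<d. \<Sum>j\<in>{..<d} - {i}. f i j * of_bool (a = i) * of_bool (c = j))
      = of_bool (a \<noteq> c) * f a c"
    using assms by (simp add: sum_distrib_right[symmetric])
  moreover have "(\<Sum>i<d. \<Sum>j\<in>{..<d} - {i}. f i j * of_bool (a = j) * of_bool (c = i))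
      = of_bool (a \<noteq> c) * f a c"
    using assms by (simp add: sum_distrib_right[symmetric] sym)
  ultimately show ?thesis
    by (simp add: algebra_simps sum.distrib)
qed

lemma completely_positive_if_nonneg_gram:
  fixes L :: "'l set" and b :: "'l \<Rightarrow> nat \<Rightarrow> real"
  assumes "finite L" and nonneg: "\<And>t i. t \<in> L \<Longrightarrow> i < d \<Longrightarrow> b t i \<ge> 0"
    and gram: "\<And>i j. i < d \<Longrightarrow> j < d \<Longrightarrow> A i j = (\<Sum>t\<in>L. b t i * b t j)"
  shows "completely_positive d A"
proof -
  obtain h where h: "bij_betw h {..<card L} L"
    using ex_bij_betw_nat_finite[OF \<open>finite L\<close>] by (auto simp: atLeast0LessThan)
  have "(\<Sum>l<card L. b (h l) i * b (h l) j) = (\<Sum>t\<in>L. b t i * b t j)" for i j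
    using sum.reindex_bij_betw[OF h, of "\<lambda>t. b t i * b t j"] by simp
  moreover have "h l \<in> L" if "l < card L" for l
    using h that by (auto simp: bij_betw_def)
  ultimately show ?thesis
    unfolding completely_positive_def using nonneg gram
    by (intro exI[of _ "card L"] exI[of _ "\<lambda>i l. b (h l) i"]) auto
qed

lemma completely_positive_add:
  assumes "completely_positive d A" "completely_positive d B"
    and "\<And>i j. i < d \<Longrightarrow> j < d \<Longrightarrow> C i j = A i j + B i j"
  shows "completely_positive d C"
proof -
  obtain k :: nat and U :: "nat \<Rightarrow> nat \<Rightarrow> real"
    where U: "\<forall>i<d. \<forall>l<k. U i l \<ge> 0" "\<forall>i<d. \<forall>j<d. A i j = (\<Sum>l<k. U i l * U j l)"
    using assms(1) unfolding completely_positive_def by blast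
  obtain k' :: nat and V :: "nat \<Rightarrow> nat \<Rightarrow> real"
    where V: "\<forall>i<d. \<forall>l<k'. V i l \<ge> 0" "\<forall>i<d. \<forall>j<d. B i j = (\<Sum>l<k'. V i l * V j l)"
    using assms(2) unfolding completely_positive_def by blast
  show ?thesis
    by (rule completely_positive_if_nonneg_gram[where L = "{..<k} <+> {..<k'}"
          and b = "case_sum (\<lambda>l i. U i l) (\<lambda>l i. V i l)"])
      (use U V assms(3) in \<open>auto simp: sum.Plus\<close>)
qed

lemma completely_positive_rank_one:
  assumes "\<And>i. i < d \<Longrightarrow> v i \<ge> 0"
  shows "completely_positive d (\<lambda>i j. v i * v j)"
  using assms by (intro completely_positive_if_nonneg_gram[where L = "{()}" and b = "\<lambda>_. v"]) auto

lemma completely_positive_diagonal: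
  assumes "\<And>i. i < d \<Longrightarrow> r i \<ge> 0"
  shows "completely_positive d (\<lambda>i j. of_bool (i = j) * r i)"
  using assms
  by (intro completely_positive_if_nonneg_gram[where L = "{..<d}"
        and b = "\<lambda>t i. if i = t then sqrt (r t) else 0"])
    (auto simp: if_distrib[of "\<lambda>x. x * _"] cong: if_cong)

lemma completely_positive_off_diagonal:
  fixes f :: "nat \<Rightarrow> nat \<Rightarrow> real"
  assumes nonneg: "\<And>i j. i < d \<Longrightarrow> j < d \<Longrightarrow> f i j \<ge> 0"
    and sym: "\<And>i j. i < d \<Longrightarrow> j < d \<Longrightarrow> f i j = f j i"
  shows "completely_positive d
           (\<lambda>a c. of_bool (a = c) * (\<Sum>j\<in>{..<d} - {a}. f a j) + of_bool (a \<noteq> c) * f a c)"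
proof -
  define v where "v q a = sqrt (f (fst q) (snd q) / 2) * (of_bool (a = fst q) + of_bool (a = snd q))"
    for q a
  have product: "v (i, j) a * v (i, j) c
      = f i j / 2 * (of_bool (a = i) + of_bool (a = j)) * (of_bool (c = i) + of_bool (c = j))"
    if "i < d" "j < d" for i j a c
  proof -
    have "v (i, j) a * v (i, j) c = sqrt (f i j / 2) * sqrt (f i j / 2)
        * (of_bool (a = i) + of_bool (a = j)) * (of_bool (c = i) + of_bool (c = j))"
      by (simp only: v_def fst_conv snd_conv mult_ac)
    also have "sqrt (f i j / 2) * sqrt (f i j / 2) = f i j / 2"
      using nonneg[OF that] by simp
    finally show ?thesis .
  qed
  show ?thesis
  proof (rule completely_positive_if_nonneg_gram[where L = "Sigma {..<d} (\<lambda>i. {..<d} - {i})"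
        and b = v])
    fix a c assume "a < d" "c < d"
    have "(\<Sum>q\<in>Sigma {..<d} (\<lambda>i. {..<d} - {i}). v q a * v q c)
        = (\<Sum>i<d. \<Sum>j\<in>{..<d} - {i}. v (i, j) a * v (i, j) c)"
      by (subst sum.Sigma) auto
    also have "\<dots> = (\<Sum>i<d. \<Sum>j\<in>{..<d} - {i}.
          f i j * (of_bool (a = i) + of_bool (a = j)) * (of_bool (c = i) + of_bool (c = j))) / 2"
      by (simp add: product sum_divide_distrib)
    also have "\<dots> = of_bool (a = c) * (\<Sum>j\<in>{..<d} - {a}. f a j) + of_bool (a \<noteq> c) * f a c"
      using off_diagonal_pair_sum[OF \<open>a < d\<close> \<open>c < d\<close>, of f] sym by simp
    finally show "of_bool (a = c) * (\<Sum>j\<in>{..<d} - {a}. f a j) + of_bool (a \<noteq> c) * f a c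
        = (\<Sum>q\<in>Sigma {..<d} (\<lambda>i. {..<d} - {i}). v q a * v q c)" ..
  qed (auto simp: v_def nonneg)
qed

lemma completely_positive_if_diagonally_dominant:
  fixes N :: "nat \<Rightarrow> nat \<Rightarrow> real"
  assumes nonneg: "\<And>i j. i < d \<Longrightarrow> j < d \<Longrightarrow> N i j \<ge> 0"
    and sym: "\<And>i j. i < d \<Longrightarrow> j < d \<Longrightarrow> N i j = N j i"
    and dominant: "\<And>i. i < d \<Longrightarrow> (\<Sum>j\<in>{..<d} - {i}. N i j) \<le> N i i"
  shows "completely_positive d N"
proof (rule completely_positive_add)
  show "completely_positive d (\<lambda>a c. of_bool (a = c) * (N a a - (\<Sum>j\<in>{..<d} - {a}. N a j)))"
    using dominant by (intro completely_positive_diagonal) simp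
  show "completely_positive d
      (\<lambda>a c. of_bool (a = c) * (\<Sum>j\<in>{..<d} - {a}. N a j) + of_bool (a \<noteq> c) * N a c)"
    using nonneg sym by (rule completely_positive_off_diagonal)
qed (auto simp: algebra_simps)

lemma completely_positive_if_rank_one_dominant:
  fixes M :: "nat \<Rightarrow> nat \<Rightarrow> real"
  assumes sym: "\<And>i j. i < d \<Longrightarrow> j < d \<Longrightarrow> M i j = M j i"
    and u_nonneg: "\<And>i. i < d \<Longrightarrow> u i \<ge> 0" and u_sum: "(\<Sum>i<d. u i) = 1" and "lam \<ge> 0"
    and entrywise: "\<And>i j. i < d \<Longrightarrow> j < d \<Longrightarrow> lam * u i * u j \<le> M i j"
    and dominant:
      "\<And>i. i < d \<Longrightarrow> (\<Sum>j\<in>{..<d} - {i}. M i j) - M i i \<le> lam * u i * (1 - 2 * u i)"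
  shows "completely_positive d M"
proof (rule completely_positive_add)
  show "completely_positive d (\<lambda>i j. sqrt lam * u i * (sqrt lam * u j))"
    using u_nonneg \<open>lam \<ge> 0\<close> by (intro completely_positive_rank_one) simp
  have "(\<Sum>j\<in>{..<d} - {i}. M i j - lam * u i * u j) \<le> M i i - lam * u i * u i" if "i < d" for i
  proof -
    have "(\<Sum>j\<in>{..<d} - {i}. u j) = 1 - u i"
      using u_sum sum.remove[of "{..<d}" i u] that by simp
    then have "(\<Sum>j\<in>{..<d} - {i}. M i j - lam * u i * u j)
        = (\<Sum>j\<in>{..<d} - {i}. M i j) - lam * u i * (1 - u i)"
      by (simp add: sum_subtractf sum_distrib_left[symmetric])
    then show ?thesis
      using dominant[OF that] by (simp add: algebra_simps)
  qed
  then show "completely_positive d (\<lambda>i j. M i j - lam * u i * u j)"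
    using entrywise sym by (intro completely_positive_if_diagonally_dominant) (auto simp: mult_ac)
qed (simp add: \<open>lam \<ge> 0\<close> algebra_simps)

section \<open>Averaging over phases\<close>

definition ket_bra :: "('a \<Rightarrow> complex) \<Rightarrow> 'a \<Rightarrow> 'a \<Rightarrow> complex" where
  "ket_bra \<psi> a c = \<psi> a * cnj (\<psi> c)"

lemma is_state_on_ket_bra:
  assumes "(\<Sum>a\<in>I. (cmod (\<psi> a))\<^sup>2) = 1"
  shows "is_state_on I (ket_bra \<psi>)"
proof -
  have "(\<Sum>a\<in>I. \<Sum>c\<in>I. cnj (v a) * ket_bra \<psi> a c * v c) = of_real ((cmod z)\<^sup>2)"
    if "z = (\<Sum>c\<in>I. cnj (\<psi> c) * v c)" for v :: "'a \<Rightarrow> complex" and z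
  proof -
    have "(\<Sum>a\<in>I. \<Sum>c\<in>I. cnj (v a) * ket_bra \<psi> a c * v c) = cnj z * z"
      by (simp add: that ket_bra_def sum_product mult_ac)
    then show ?thesis
      by (metis complex_norm_square mult.commute)
  qed
  moreover have "(\<Sum>a\<in>I. ket_bra \<psi> a a) = of_real (\<Sum>a\<in>I. (cmod (\<psi> a))\<^sup>2)"
    unfolding ket_bra_def of_real_sum by (intro sum.cong refl) (rule complex_norm_square[symmetric])
  ultimately show ?thesis
    using assms by (simp add: is_state_on_def psd_on_def)
qed

lemma phase_power_sum:
  assumes "e \<le> 2" "f \<le> (2::nat)"
  shows "(\<Sum>r<4. (\<i> ^ r) ^ e * cnj (\<i> ^ r) ^ f) = (if e = f then 4 else (0::complex))"
proof -
  have "(\<Sum>r<(4::nat). g r) = g 0 + g 1 + g 2 + (g 3 :: complex)" for g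
    by (simp add: numeral_eq_Suc)
  moreover have "e \<in> {0, 1, 2}" "f \<in> {0, 1, 2}" using assms by auto
  ultimately show ?thesis by (auto simp: power2_eq_square power3_eq_cube)
qed

lemma pair_multiplicities_eq_iff:
  fixes i j k l :: nat
  assumes "i < d" "j < d" "k < d"
  shows "(\<forall>t<d. (if t = i then 1 else 0) + (if t = j then 1 else 0) =
              (if t = k then 1 else (0::nat)) + (if t = l then 1 else 0))
     \<longleftrightarrow> (k = i \<and> l = j) \<or> (k = j \<and> l = i)"
proof
  assume H: "\<forall>t<d. (if t = i then 1 else 0) + (if t = j then 1 else 0) =
              (if t = k then 1 else (0::nat)) + (if t = l then 1 else 0)"
  from H[rule_format, OF assms(1)] H[rule_format, OF assms(2)] H[rule_format, OF assms(3)]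
  show "(k = i \<and> l = j) \<or> (k = j \<and> l = i)"
    by (cases "i = j"; cases "k = i"; cases "l = i"; cases "k = j"; cases "l = j"; simp)
qed auto

lemma phase_average:
  assumes "i < d" "j < d" "k < d" "l < d"
  shows "(\<Sum>m \<in> {..<d} \<rightarrow>\<^sub>E {..<4::nat}. \<i> ^ m i * cnj (\<i> ^ m k) * \<i> ^ m j * cnj (\<i> ^ m l))
       = (if (k = i \<and> l = j) \<or> (k = j \<and> l = i) then 4 ^ d else 0)"
proof -
  \<comment> \<open>e t and f t count the occurrences of t among i, j and among k, l; the average
    factorises over the coordinates t, and each factor vanishes unless e t = f t.\<close>
  define e :: "nat \<Rightarrow> nat" where "e t = (if t = i then 1 else 0) + (if t = j then 1 else 0)" for t
  define f :: "nat \<Rightarrow> nat" where "f t = (if t = k then 1 else 0) + (if t = l then 1 else 0)" for t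
  have power_indicator: "(z::complex) ^ (if P then 1 else 0) = (if P then z else 1)" for z P
    by simp
  have "(\<Sum>m \<in> {..<d} \<rightarrow>\<^sub>E {..<4::nat}. \<i> ^ m i * cnj (\<i> ^ m k) * \<i> ^ m j * cnj (\<i> ^ m l))
      = (\<Sum>m \<in> {..<d} \<rightarrow>\<^sub>E {..<4::nat}. \<Prod>t<d. (\<i> ^ m t) ^ e t * cnj (\<i> ^ m t) ^ f t)"
    using assms
    by (simp add: e_def f_def power_add prod.distrib power_indicator prod.delta mult_ac)
  also have "\<dots> = (\<Prod>t<d. \<Sum>r<4. (\<i> ^ r) ^ e t * cnj (\<i> ^ r) ^ f t)"
    by (simp add: prod_sum_PiE)
  also have "\<dots> = (\<Prod>t<d. if e t = f t then 4 else 0)"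
    by (intro prod.cong refl phase_power_sum) (auto simp: e_def f_def)
  also have "\<dots> = (if \<forall>t<d. e t = f t then 4 ^ d else 0)"
    by auto
  finally show ?thesis
    using pair_multiplicities_eq_iff[OF assms(1-3)] by (simp add: e_def f_def)
qed

definition phase_vector :: "(nat \<Rightarrow> real) \<Rightarrow> (nat \<Rightarrow> nat) \<Rightarrow> nat \<Rightarrow> complex" where
  "phase_vector b m a = complex_of_real (sqrt (b a)) * \<i> ^ m a"

lemma is_state_on_phase_vector:
  assumes "\<And>a. a < d \<Longrightarrow> b a \<ge> 0" and "(\<Sum>a<d. b a) = 1"
  shows "is_state_on {..<d} (ket_bra (phase_vector b m))"
proof (rule is_state_on_ket_bra)
  have "(cmod (phase_vector b m a))\<^sup>2 = b a" if "a < d" for a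
    using assms(1)[OF that] by (simp add: phase_vector_def norm_mult norm_power)
  then show "(\<Sum>a<d. (cmod (phase_vector b m a))\<^sup>2) = 1"
    using assms(2) by simp
qed

lemma phase_average_ket_bra:
  assumes nonneg: "\<And>a. a < d \<Longrightarrow> b a \<ge> 0" and "i < d" "j < d" "k < d" "l < d"
  shows "(\<Sum>m \<in> {..<d} \<rightarrow>\<^sub>E {..<4::nat}.
            ket_bra (phase_vector b m) i k * ket_bra (phase_vector b m) j l)
       = complex_of_real (4 ^ d * b i * b j) * of_bool ((k = i \<and> l = j) \<or> (k = j \<and> l = i))"
proof -
  define s where "s = sqrt (b i) * sqrt (b k) * sqrt (b j) * sqrt (b l)"
  have "(\<Sum>m \<in> {..<d} \<rightarrow>\<^sub>E {..<4::nat}.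
          ket_bra (phase_vector b m) i k * ket_bra (phase_vector b m) j l)
      = complex_of_real s
        * (\<Sum>m \<in> {..<d} \<rightarrow>\<^sub>E {..<4::nat}. \<i> ^ m i * cnj (\<i> ^ m k) * \<i> ^ m j * cnj (\<i> ^ m l))"
    by (simp add: sum_distrib_left ket_bra_def phase_vector_def s_def mult_ac)
  also have "\<dots> = complex_of_real s * (if (k = i \<and> l = j) \<or> (k = j \<and> l = i) then 4 ^ d else 0)"
    by (simp only: phase_average[OF assms(2-5)])
  also have "\<dots> = complex_of_real (4 ^ d * b i * b j)
      * of_bool ((k = i \<and> l = j) \<or> (k = j \<and> l = i))"
  proof (cases "(k = i \<and> l = j) \<or> (k = j \<and> l = i)")
    case True
    then have "s = (sqrt (b i))\<^sup>2 * (sqrt (b j))\<^sup>2"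
      by (auto simp: s_def power2_eq_square mult_ac)
    then have "s = b i * b j"
      using nonneg \<open>i < d\<close> \<open>j < d\<close> by simp
    with True show ?thesis by simp
  qed auto
  finally show ?thesis .
qed

section \<open>Separability of diagonal symmetric states\<close>

lemma separable_if_product_decomposition:
  fixes L :: "'l set" and w :: "'l \<Rightarrow> real" and RA RB :: "'l \<Rightarrow> nat \<Rightarrow> nat \<Rightarrow> complex"
  assumes "finite L"
    and nonneg: "\<And>t. t \<in> L \<Longrightarrow> w t \<ge> 0"
    and states: "\<And>t. t \<in> L \<Longrightarrow> w t \<noteq> 0 \<Longrightarrow>
                   is_state_on {..<d} (RA t) \<and> is_state_on {..<d} (RB t)"
    and decomp: "\<And>i j k l. i < d \<Longrightarrow> j < d \<Longrightarrow> k < d \<Longrightarrow> l < d \<Longrightarrow>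
                   A (i, j) (k, l) = (\<Sum>t\<in>L. complex_of_real (w t) * RA t i k * RB t j l)"
    and trace: "(\<Sum>i<d. \<Sum>j<d. A (i, j) (i, j)) = 1"
  shows "separable d A"
proof -
  define L' where "L' = {t \<in> L. w t \<noteq> 0}"
  have "finite L'"
    using \<open>finite L\<close> by (simp add: L'_def)
  have restrict: "(\<Sum>t\<in>L. complex_of_real (w t) * g t) = (\<Sum>t\<in>L'. complex_of_real (w t) * g t)"
    for g
    using \<open>finite L\<close> by (intro sum.mono_neutral_right) (auto simp: L'_def)
  have "(\<Sum>t\<in>L'. complex_of_real (w t))
      = (\<Sum>t\<in>L'. complex_of_real (w t) * (\<Sum>i<d. RA t i i) * (\<Sum>j<d. RB t j j))"
    using states by (intro sum.cong refl) (auto simp: L'_def is_state_on_def)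
  also have "\<dots> = (\<Sum>i<d. \<Sum>j<d. A (i, j) (i, j))"
    by (simp add: decomp restrict sum_distrib_left sum_distrib_right sum.swap[of _ L'] mult_ac)
  finally have weights: "(\<Sum>t\<in>L'. w t) = 1"
    using trace by (metis of_real_eq_1_iff of_real_sum)
  obtain h where h: "bij_betw h {..<card L'} L'"
    using ex_bij_betw_nat_finite[OF \<open>finite L'\<close>] by (auto simp: atLeast0LessThan)
  have "h m \<in> L'" if "m < card L'" for m
    using h that by (auto simp: bij_betw_def)
  then have states': "\<forall>m<card L'. w (h m) \<ge> 0 \<and>
      is_state_on {..<d} (RA (h m)) \<and> is_state_on {..<d} (RB (h m))"
    using nonneg states by (auto simp: L'_def)
  have weights': "(\<Sum>m<card L'. w (h m)) = 1"
    using weights by (simp add: sum.reindex_bij_betw[OF h])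
  have decomp': "\<forall>i<d. \<forall>j<d. \<forall>k<d. \<forall>l<d.
      A (i, j) (k, l) = (\<Sum>m<card L'. complex_of_real (w (h m)) * RA (h m) i k * RB (h m) j l)"
    using restrict by (simp add: decomp mult.assoc sum.reindex_bij_betw[OF h, symmetric])
  show ?thesis
    unfolding separable_def
    by (rule exI[of _ "card L'"], rule exI[of _ "w \<circ> h"],
        rule exI[of _ "RA \<circ> h"], rule exI[of _ "RB \<circ> h"])
      (use states' weights' decomp' in simp)
qed

lemma ds_rho_entry:
  assumes p: "ds_coeffs d p" and "i < d" "j < d" "k < d" "l < d"
  shows "ds_rho d p (i, j) (k, l)
       = complex_of_real (assoc_mat p i j) * of_bool ((k = i \<and> l = j) \<or> (k = j \<and> l = i))"
proof -
  let ?S = "{(a, b). a \<le> b \<and> b < d}"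
  let ?f = "\<lambda>(a, b). complex_of_real (p a b) * dicke a b (i, j) * cnj (dicke a b (k, l))"
  have "finite ?S"
    by (rule finite_subset[of _ "{..<d} \<times> {..<d}"]) auto
  have "ds_rho d p (i, j) (k, l) = sum ?f ?S"
    by (simp add: ds_rho_def)
  also have "\<dots> = sum ?f {(min i j, max i j)}"
    using \<open>finite ?S\<close> \<open>i < d\<close> \<open>j < d\<close>
    by (intro sum.mono_neutral_right) (auto simp: dicke_def min_def max_def split: if_splits)
  also have "\<dots> = complex_of_real (assoc_mat p i j) * of_bool ((k = i \<and> l = j) \<or> (k = j \<and> l = i))"
  proof -
    have half: "complex_of_real (1 / sqrt 2) * complex_of_real (1 / sqrt 2) = 1 / 2"
      by (simp flip: of_real_mult)
    have "p j i = p i j"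
      using p by (simp add: ds_coeffs_def)
    then show ?thesis
      using half by (cases i j rule: linorder_cases) (auto simp: dicke_def assoc_mat_def)
  qed
  finally show ?thesis .
qed

lemma dicke_norm:
  assumes "a \<le> b" "b < d"
  shows "(\<Sum>y\<in>bip d. dicke a b y * cnj (dicke a b y)) = 1"
proof (cases "a = b")
  case True
  then show ?thesis
    using assms by (simp add: dicke_def if_distrib[of "\<lambda>x. x * _"] cong: if_cong)
next
  case False
  have "dicke a b y * cnj (dicke a b y) = of_bool (y = (a, b)) / 2 + of_bool (y = (b, a)) / 2" for y
    using False by (auto simp: dicke_def simp flip: of_real_mult)
  then show ?thesis
    using assms by (simp add: sum.distrib sum_divide_distrib[symmetric])
qed

lemma ds_rho_trace:
  assumes "ds_coeffs d p"
  shows "(\<Sum>i<d. \<Sum>j<d. ds_rho d p (i, j) (i, j)) = 1"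
proof -
  let ?S = "{(a, b). a \<le> b \<and> b < d}"
  have "(\<Sum>i<d. \<Sum>j<d. ds_rho d p (i, j) (i, j)) = (\<Sum>y\<in>bip d. ds_rho d p y y)"
    by (simp add: sum.cartesian_product)
  also have "\<dots> = (\<Sum>y\<in>bip d. \<Sum>(a, b)\<in>?S. complex_of_real (p a b) * (dicke a b y * cnj (dicke a b y)))"
    by (simp add: ds_rho_def case_prod_beta mult.assoc)
  also have "\<dots> = (\<Sum>(a, b)\<in>?S. complex_of_real (p a b) * (\<Sum>y\<in>bip d. dicke a b y * cnj (dicke a b y)))"
    by (simp add: sum.swap[of _ "bip d"] sum_distrib_left case_prod_beta)
  also have "\<dots> = (\<Sum>(a, b)\<in>?S. complex_of_real (p a b))"
    by (intro sum.cong refl) (auto simp: dicke_norm)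
  also have "\<dots> = complex_of_real (\<Sum>(a, b)\<in>?S. p a b)"
    by (simp add: case_prod_beta)
  also have "(\<Sum>(a, b)\<in>?S. p a b) = 1"
    using assms by (simp add: ds_coeffs_def)
  finally show ?thesis
    by simp
qed

lemma rank_one_as_phase_average:
  fixes v :: "nat \<Rightarrow> real"
  assumes nonneg: "\<And>a. a < d \<Longrightarrow> v a \<ge> 0" and "i < d" "j < d" "k < d" "l < d"
  defines "T \<equiv> \<Sum>a<d. v a"
  shows "complex_of_real (v i * v j) * of_bool ((k = i \<and> l = j) \<or> (k = j \<and> l = i))
       = (\<Sum>m \<in> {..<d} \<rightarrow>\<^sub>E {..<4}. complex_of_real (T\<^sup>2 / 4 ^ d)
            * ket_bra (phase_vector (\<lambda>a. v a / T) m) i k * ket_bra (phase_vector (\<lambda>a. v a / T) m) j l)"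
proof (cases "T = 0")
  case True
  then have "v a = 0" if "a < d" for a
    using nonneg that sum_nonneg_eq_0_iff[of "{..<d}" v] by (simp add: T_def)
  then show ?thesis
    using True \<open>i < d\<close> by simp
next
  case False
  let ?K = "\<lambda>m. ket_bra (phase_vector (\<lambda>a. v a / T) m)"
  have average: "(\<Sum>m \<in> {..<d} \<rightarrow>\<^sub>E {..<4}. ?K m i k * ?K m j l)
      = complex_of_real (4 ^ d * (v i / T) * (v j / T))
        * of_bool ((k = i \<and> l = j) \<or> (k = j \<and> l = i))"
    using assms(2-5) nonneg
    by (intro phase_average_ket_bra) (auto simp: T_def intro!: divide_nonneg_nonneg sum_nonneg)
  have "(\<Sum>m \<in> {..<d} \<rightarrow>\<^sub>E {..<4}. complex_of_real (T\<^sup>2 / 4 ^ d) * ?K m i k * ?K m j l)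
      = complex_of_real (T\<^sup>2 / 4 ^ d) * (\<Sum>m \<in> {..<d} \<rightarrow>\<^sub>E {..<4}. ?K m i k * ?K m j l)"
    by (simp add: sum_distrib_left mult.assoc)
  also have "\<dots> = complex_of_real (v i * v j) * of_bool ((k = i \<and> l = j) \<or> (k = j \<and> l = i))"
    using False by (simp add: average power2_eq_square)
  finally show ?thesis ..
qed

lemma separable_ds_rho_if_completely_positive:
  assumes p: "ds_coeffs d p" and "completely_positive d (assoc_mat p)"
  shows "separable d (ds_rho d p)"
proof -
  obtain n :: nat and B :: "nat \<Rightarrow> nat \<Rightarrow> real"
    where B_nonneg: "\<forall>a<d. \<forall>t<n. B a t \<ge> 0"
      and B: "\<forall>i<d. \<forall>j<d. assoc_mat p i j = (\<Sum>t<n. B i t * B j t)"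
    using assms(2) unfolding completely_positive_def by blast
  define T where "T t = (\<Sum>a<d. B a t)" for t
  define w where "w q = (T (fst q))\<^sup>2 / 4 ^ d" for q :: "nat \<times> (nat \<Rightarrow> nat)"
  define \<rho> where "\<rho> q = ket_bra (phase_vector (\<lambda>a. B a (fst q) / T (fst q)) (snd q))"
    for q :: "nat \<times> (nat \<Rightarrow> nat)"
  show ?thesis
  proof (rule separable_if_product_decomposition[where L = "{..<n} \<times> ({..<d} \<rightarrow>\<^sub>E {..<4})"
        and w = w and RA = \<rho> and RB = \<rho>])
    fix q assume q: "q \<in> {..<n} \<times> ({..<d} \<rightarrow>\<^sub>E {..<4::nat})" and "w q \<noteq> 0"
    then have "(\<Sum>a<d. B a (fst q) / T (fst q)) = 1"
      by (simp add: w_def T_def sum_divide_distrib[symmetric])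
    then show "is_state_on {..<d} (\<rho> q) \<and> is_state_on {..<d} (\<rho> q)"
      using q B_nonneg
      by (auto simp: \<rho>_def T_def intro!: is_state_on_phase_vector divide_nonneg_nonneg sum_nonneg)
  next
    fix i j k l assume ijkl: "i < d" "j < d" "k < d" "l < d"
    let ?I = "of_bool ((k = i \<and> l = j) \<or> (k = j \<and> l = i)) :: complex"
    have "ds_rho d p (i, j) (k, l) = (\<Sum>t<n. complex_of_real (B i t * B j t) * ?I)"
      using B ijkl by (simp only: ds_rho_entry[OF p] of_real_sum sum_distrib_right)
    also have "\<dots> = (\<Sum>t<n. \<Sum>m \<in> {..<d} \<rightarrow>\<^sub>E {..<4}.
        complex_of_real (w (t, m)) * \<rho> (t, m) i k * \<rho> (t, m) j l)"
    proof (intro sum.cong refl)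
      fix t assume "t \<in> {..<n}"
      then show "complex_of_real (B i t * B j t) * ?I
          = (\<Sum>m \<in> {..<d} \<rightarrow>\<^sub>E {..<4}. complex_of_real (w (t, m)) * \<rho> (t, m) i k * \<rho> (t, m) j l)"
        unfolding w_def \<rho>_def T_def fst_conv snd_conv
        by (intro rank_one_as_phase_average) (use B_nonneg ijkl in auto)
    qed
    finally show "ds_rho d p (i, j) (k, l)
        = (\<Sum>q\<in>{..<n} \<times> ({..<d} \<rightarrow>\<^sub>E {..<4}). complex_of_real (w q) * \<rho> q i k * \<rho> q j l)"
      by (simp add: sum.cartesian_product case_prod_unfold)
  qed (auto simp: w_def ds_rho_trace[OF p] finite_PiE)
qed

theorem theorem6:
  fixes d :: nat and p :: "nat \<Rightarrow> nat \<Rightarrow> real" and x :: "nat \<Rightarrow> real" and lam :: real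
  assumes "d \<ge> 2"
    and "ds_coeffs d p"
    and "PPT d (ds_rho d p)"
    and "\<forall>i<d. x i > 0"
    and "0 \<le> lam" and "lam < 1"
    and "\<forall>i<d. \<forall>j<d. lam \<le> assoc_mat p i j * (\<Sum>k<d. x k)^2 / (x i * x j)"
    and "in_range d (assoc_mat p) (\<lambda>i. x i / (\<Sum>k<d. x k))"
    and "lam \<le> 1 / (\<Sum>i<d. \<Sum>j<d. (x i / (\<Sum>k<d. x k)) * pinv d (assoc_mat p) i j * (x j / (\<Sum>k<d. x k)))"
    and "\<forall>i<d. lam * x i * ((\<Sum>k<d. x k) - 2 * x i) \<ge>
           (\<Sum>k<d. x k)^2 * ((\<Sum>j\<in>{..<d} - {i}. assoc_mat p i j) - assoc_mat p i i)"
  shows "separable d (ds_rho d p) \<and> completely_positive d (assoc_mat p)"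
proof -
  define s where "s = (\<Sum>k<d. x k)"
  define u where "u i = x i / s" for i
  have "s > 0"
    unfolding s_def using assms(1,4) by (intro sum_pos) (auto simp: lessThan_empty_iff)
  have "completely_positive d (assoc_mat p)"
  proof (rule completely_positive_if_rank_one_dominant[where u = u and lam = lam])
    fix i j assume "i < d" "j < d"
    have "lam * (x i * x j) \<le> assoc_mat p i j * s\<^sup>2"
      using assms(4,7) \<open>i < d\<close> \<open>j < d\<close> by (simp add: s_def le_divide_eq)
    then show "lam * u i * u j \<le> assoc_mat p i j"
      using \<open>s > 0\<close> by (simp add: u_def field_simps power2_eq_square)
  next
    fix i assume "i < d"
    let ?excess = "(\<Sum>j\<in>{..<d} - {i}. assoc_mat p i j) - assoc_mat p i i"
    have "s\<^sup>2 * (lam * u i * (1 - 2 * u i)) = lam * x i * (s - 2 * x i)"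
      using \<open>s > 0\<close> by (simp add: u_def field_simps power2_eq_square)
    moreover have "s\<^sup>2 * ?excess \<le> lam * x i * (s - 2 * x i)"
      using assms(10) \<open>i < d\<close> by (simp add: s_def)
    ultimately have "s\<^sup>2 * ?excess \<le> s\<^sup>2 * (lam * u i * (1 - 2 * u i))"
      by linarith
    then show "?excess \<le> lam * u i * (1 - 2 * u i)"
      using \<open>s > 0\<close> by simp
  next
    show "(\<Sum>i<d. u i) = 1"
      using \<open>s > 0\<close> by (simp add: u_def s_def sum_divide_distrib[symmetric])
  qed (use assms(2,4,5) \<open>s > 0\<close> in \<open>auto simp: ds_coeffs_def assoc_mat_def u_def\<close>)
  then show ?thesis
    using separable_ds_rho_if_completely_positive[OF assms(2)] by blast
qed

end
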